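(* For all real numbers $a,b,c>0$, \[ \frac{54abc + (a+b+c)^{3}}{\left(\sqrt{a^{2}+2bc} + \sqrt{2ab+c^{2}} + \sqrt{2ac+b^{2}}\right)^{2}} \leq a+b+c. \] *)

theory Defs
  imports Complex_Main
begin

end

theory Submission
  imports Defs
begin

text \<open>Substitute \<open>a = x\<^sup>2\<close>, \<open>b = y\<^sup>2\<close>, \<open>c = z\<^sup>2\<close> and write \<open>P, Q, R\<close> for the three radicands.
  Since \<open>P + Q + R = (a + b + c)\<^sup>2\<close>, the claim is equivalent to
  \<open>27 a b c \<le> (a + b + c) (\<surd>P \<surd>Q + \<surd>P \<surd>R + \<surd>Q \<surd>R)\<close>.
  Each product of two roots dominates an explicit polynomial, e.g.
  \<open>\<surd>P \<surd>Q \<ge> x\<^sup>2z\<^sup>2 + 2xy\<^sup>2z\<close>, because \<open>PQ\<close> minus its square is \<open>2y\<^sup>2(x\<^sup>3 - z\<^sup>3)\<^sup>2\<close>.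
  The sum of these three polynomials times \<open>x\<^sup>2 + y\<^sup>2 + z\<^sup>2\<close> is at least \<open>27x\<^sup>2y\<^sup>2z\<^sup>2\<close> by AM-GM.\<close>

lemma cross_term_le_sqrt_mult:
  fixes u v w :: real
  shows "u\<^sup>2 * w\<^sup>2 + 2 * u * v\<^sup>2 * w \<le> sqrt (u^4 + 2 * v\<^sup>2 * w\<^sup>2) * sqrt (w^4 + 2 * u\<^sup>2 * v\<^sup>2)"
proof -
  have "(u^4 + 2 * v\<^sup>2 * w\<^sup>2) * (w^4 + 2 * u\<^sup>2 * v\<^sup>2) - (u\<^sup>2 * w\<^sup>2 + 2 * u * v\<^sup>2 * w)\<^sup>2
          = 2 * v\<^sup>2 * (u^3 - w^3)\<^sup>2"
    by (simp add: algebra_simps power2_eq_square power3_eq_cube power4_eq_xxxx)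
  then have "(u\<^sup>2 * w\<^sup>2 + 2 * u * v\<^sup>2 * w)\<^sup>2 \<le> (u^4 + 2 * v\<^sup>2 * w\<^sup>2) * (w^4 + 2 * u\<^sup>2 * v\<^sup>2)"
    by (smt (verit) zero_le_power2 mult_nonneg_nonneg)
  then show ?thesis
    by (simp add: real_le_rsqrt flip: real_sqrt_mult)
qed

lemma sum_mult_sum_pair_prod_ge:
  fixes p q r :: real
  assumes "p \<ge> 0" "q \<ge> 0" "r \<ge> 0"
  shows "9 * (p * q * r) \<le> (p + q + r) * (p * q + q * r + r * p)"
proof -
  have "(p + q + r) * (p * q + q * r + r * p) - 9 * (p * q * r)
          = p * (q - r)\<^sup>2 + q * (r - p)\<^sup>2 + r * (p - q)\<^sup>2"
    by (simp add: algebra_simps power2_eq_square)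
  moreover have "p * (q - r)\<^sup>2 + q * (r - p)\<^sup>2 + r * (p - q)\<^sup>2 \<ge> 0"
    using assms by simp
  ultimately show ?thesis by linarith
qed

lemma sum_pair_prod_le_sum_squares:
  fixes x y z :: real
  shows "x * y + y * z + z * x \<le> x\<^sup>2 + y\<^sup>2 + z\<^sup>2"
proof -
  have "x\<^sup>2 + y\<^sup>2 + z\<^sup>2 - (x * y + y * z + z * x) = ((x - y)\<^sup>2 + (y - z)\<^sup>2 + (z - x)\<^sup>2) / 2"
    by (simp add: algebra_simps power2_eq_square)
  moreover have "((x - y)\<^sup>2 + (y - z)\<^sup>2 + (z - x)\<^sup>2) / 2 \<ge> 0"
    by simp
  ultimately show ?thesis
    by linarith
qed

lemma cross_terms_amgm:
  fixes x y z :: real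
  assumes "x \<ge> 0" "y \<ge> 0" "z \<ge> 0"
  shows "27 * (x\<^sup>2 * y\<^sup>2 * z\<^sup>2)
           \<le> (x\<^sup>2 + y\<^sup>2 + z\<^sup>2) * ((x\<^sup>2 * z\<^sup>2 + 2 * x * y\<^sup>2 * z) + (x\<^sup>2 * y\<^sup>2 + 2 * x * z\<^sup>2 * y)
                                   + (z\<^sup>2 * y\<^sup>2 + 2 * z * x\<^sup>2 * y))"
proof -
  define s where "s = x\<^sup>2 + y\<^sup>2 + z\<^sup>2"
  have s_nonneg: "s \<ge> 0" and xyz_nonneg: "x * y * z \<ge> 0"
    using assms by (simp_all add: s_def)
  have squares: "9 * (x\<^sup>2 * y\<^sup>2 * z\<^sup>2) \<le> s * (x\<^sup>2 * y\<^sup>2 + y\<^sup>2 * z\<^sup>2 + z\<^sup>2 * x\<^sup>2)"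
    using sum_mult_sum_pair_prod_ge[of "x\<^sup>2" "y\<^sup>2" "z\<^sup>2"] by (simp add: s_def)
  have "9 * (x * y * z) \<le> (x + y + z) * (x * y + y * z + z * x)"
    using sum_mult_sum_pair_prod_ge assms by blast
  also have "\<dots> \<le> (x + y + z) * s"
    using sum_pair_prod_le_sum_squares[of x y z] assms by (simp add: s_def mult_left_mono)
  finally have "x * y * z * (9 * (x * y * z)) \<le> x * y * z * ((x + y + z) * s)"
    using xyz_nonneg by (rule mult_left_mono)
  then have mixed: "9 * (x\<^sup>2 * y\<^sup>2 * z\<^sup>2) \<le> s * (x * y * z * (x + y + z))"
    by (simp add: algebra_simps power2_eq_square)
  have "s * ((x\<^sup>2 * z\<^sup>2 + 2 * x * y\<^sup>2 * z) + (x\<^sup>2 * y\<^sup>2 + 2 * x * z\<^sup>2 * y) + (z\<^sup>2 * y\<^sup>2 + 2 * z * x\<^sup>2 * y))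
          = s * (x\<^sup>2 * y\<^sup>2 + y\<^sup>2 * z\<^sup>2 + z\<^sup>2 * x\<^sup>2) + 2 * (s * (x * y * z * (x + y + z)))"
    by (simp add: algebra_simps power2_eq_square)
  with squares mixed show ?thesis
    unfolding s_def[symmetric] by linarith
qed

lemma sum_sqrt_radicands_bound:
  fixes x y z :: real
  assumes "x \<ge> 0" "y \<ge> 0" "z \<ge> 0"
  defines "P \<equiv> x^4 + 2 * y\<^sup>2 * z\<^sup>2"
    and "Q \<equiv> 2 * x\<^sup>2 * y\<^sup>2 + z^4"
    and "R \<equiv> 2 * x\<^sup>2 * z\<^sup>2 + y^4"
  shows "54 * x\<^sup>2 * y\<^sup>2 * z\<^sup>2 + (x\<^sup>2 + y\<^sup>2 + z\<^sup>2) ^ 3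
           \<le> (x\<^sup>2 + y\<^sup>2 + z\<^sup>2) * (sqrt P + sqrt Q + sqrt R)\<^sup>2"
proof -
  define s where "s = x\<^sup>2 + y\<^sup>2 + z\<^sup>2"
  define T where "T = sqrt P * sqrt Q + sqrt P * sqrt R + sqrt Q * sqrt R"
  have "P \<ge> 0" "Q \<ge> 0" "R \<ge> 0"
    by (simp_all add: P_def Q_def R_def)
  then have "(sqrt P + sqrt Q + sqrt R)\<^sup>2 = s\<^sup>2 + 2 * T"
    by (simp add: power2_eq_square power4_eq_xxxx algebra_simps P_def Q_def R_def s_def T_def)
  then have expand: "s * (sqrt P + sqrt Q + sqrt R)\<^sup>2 = s ^ 3 + 2 * (s * T)"
    by (simp add: power2_eq_square power3_eq_cube distrib_left)
  have "sqrt P * sqrt Q \<ge> x\<^sup>2 * z\<^sup>2 + 2 * x * y\<^sup>2 * z"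
    using cross_term_le_sqrt_mult[where u = x and v = y and w = z] by (simp add: P_def Q_def algebra_simps)
  moreover have "sqrt P * sqrt R \<ge> x\<^sup>2 * y\<^sup>2 + 2 * x * z\<^sup>2 * y"
    using cross_term_le_sqrt_mult[where u = x and v = z and w = y] by (simp add: P_def R_def algebra_simps)
  moreover have "sqrt Q * sqrt R \<ge> z\<^sup>2 * y\<^sup>2 + 2 * z * x\<^sup>2 * y"
    using cross_term_le_sqrt_mult[where u = z and v = x and w = y] by (simp add: Q_def R_def algebra_simps)
  ultimately have "(x\<^sup>2 * z\<^sup>2 + 2 * x * y\<^sup>2 * z) + (x\<^sup>2 * y\<^sup>2 + 2 * x * z\<^sup>2 * y) + (z\<^sup>2 * y\<^sup>2 + 2 * z * x\<^sup>2 * y) \<le> T"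
    unfolding T_def by linarith
  then have "s * ((x\<^sup>2 * z\<^sup>2 + 2 * x * y\<^sup>2 * z) + (x\<^sup>2 * y\<^sup>2 + 2 * x * z\<^sup>2 * y) + (z\<^sup>2 * y\<^sup>2 + 2 * z * x\<^sup>2 * y))
               \<le> s * T"
    by (rule mult_left_mono) (simp add: s_def)
  with cross_terms_amgm[OF assms(1-3)] have "27 * (x\<^sup>2 * y\<^sup>2 * z\<^sup>2) \<le> s * T"
    unfolding s_def by linarith
  with expand show ?thesis
    unfolding s_def[symmetric] by linarith
qed

theorem mainTheorem8:
  fixes a b c :: real
  assumes "a > 0" and "b > 0" and "c > 0"
  shows "(54 * a * b * c + (a + b + c) ^ 3) /
           (sqrt (a^2 + 2 * b * c) + sqrt (2 * a * b + c^2) + sqrt (2 * a * c + b^2)) ^ 2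
         \<le> a + b + c"
proof -
  define S where "S = sqrt (a^2 + 2 * b * c) + sqrt (2 * a * b + c^2) + sqrt (2 * a * c + b^2)"
  obtain x y z :: real where nonneg: "x \<ge> 0" "y \<ge> 0" "z \<ge> 0"
    and squares: "a = x\<^sup>2" "b = y\<^sup>2" "c = z\<^sup>2"
    using assms by (metis less_eq_real_def real_sqrt_ge_zero real_sqrt_pow2)
  have "54 * a * b * c + (a + b + c) ^ 3 \<le> (a + b + c) * S\<^sup>2"
    using sum_sqrt_radicands_bound[OF nonneg]
    by (simp add: S_def squares mult.assoc mult.left_commute flip: power_mult)
  moreover have "S > 0"
    using assms by (simp add: S_def add_pos_nonneg)
  ultimately show ?thesis
    by (simp add: S_def[symmetric] divide_le_eq)
qed

end
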